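(* Consider the queueing system in the context under MaxWeight with a diagonal matrix $\Delta$ with positive diagonal entries, in overload ($\rho\notin\mathcal{P}$), and let $\eta=\lim_{t\to\infty}X(t)/t$. Then $$\eta=\Big[\rho-\sum_{m=1}^N\alpha_mS_m\Big]^+$$ for some $\alpha_m\ge0$ with $\sum_m\alpha_m=1$. Furthermore, $\alpha_m>0$ implies $\eta\in C_{S_m}$, where $C_S=\{x\in\mathbb{R}^Q:\langle S,\Delta x\rangle=\max_{S'\in\mathcal{S}}\langle S',\Delta x\rangle\}$.
   Context: Model: $Q$ queues, finite set $\mathcal{S}=\{S_1,\dots,S_N\}\subset\mathbb{R}^Q_{\ge0}$, discrete time. Arrivals $A(t)$ with $0\le A_q(t)\le\bar A_q<\infty$ and $\rho_q=\lim_{t\to\infty}\frac1t\sum_{s=0}^{t-1}A_q(s)\in(0,\infty)$. Departures $D_q(t)=\min\{S_q(t),X_q(t)\}$, $X(t+1)=X(t)+A(t)-D(t)$, $X(0)=0$, with $S(t)\in\arg\max_{S\in\mathcal{S}}\langle S,\Delta X(t)\rangle$. $[x]^+$ is the componentwise positive part. Stability region $\mathcal{P}=\{r\in\mathbb{R}^Q_{\ge0}: r\le\sum_n\alpha_nS_n\text{ for some }\alpha_n\ge0,\sum_n\alpha_n=1\}$. (Under these assumptions $\lim_t X(t)/t$ exists.) *)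

theory Defs
  imports "HOL-Analysis.Analysis"
begin

definition pos_part :: "real^'q \<Rightarrow> real^'q" where
  "pos_part x = (\<chi> q. max 0 (x $ q))"

definition stab_region :: "(real^'q) set \<Rightarrow> (real^'q) set" where
  "stab_region Sch = {r. (\<forall>q. 0 \<le> r $ q) \<and>
     (\<exists>\<alpha>::real^'q \<Rightarrow> real. (\<forall>S\<in>Sch. 0 \<le> \<alpha> S) \<and> (\<Sum>S\<in>Sch. \<alpha> S) = 1 \<and>
        (\<forall>q. r $ q \<le> (\<Sum>S\<in>Sch. \<alpha> S *\<^sub>R S) $ q))}"

definition cone_C :: "real^'q^'q \<Rightarrow> (real^'q) set \<Rightarrow> real^'q \<Rightarrow> (real^'q) set" where
  "cone_C \<Delta> Sch S = {x. S \<bullet> (\<Delta> *v x) = Max ((\<lambda>S'. S' \<bullet> (\<Delta> *v x)) ` Sch)}"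

end

theory Submission
  imports Defs
begin

text \<open>
  Let \<open>\<alpha>\<^sub>S\<close> be a subsequential limit of the fraction of time slots in which MaxWeight
  selects \<open>S\<close>; along that subsequence the average service vector tends to
  \<open>\<sigma> = \<Sum>\<^sub>S \<alpha>\<^sub>S S\<close>. Each queue is then analysed separately: departures never exceed
  service, so \<open>\<rho>\<^sub>q - \<eta>\<^sub>q \<le> \<sigma>\<^sub>q\<close>; and if \<open>\<eta>\<^sub>q > 0\<close> the queue grows linearly, so it
  eventually always holds more than the service and departures equal service, giving
  \<open>\<eta>\<^sub>q = \<rho>\<^sub>q - \<sigma>\<^sub>q\<close>. Finally, if \<open>\<eta>\<close> lies outside \<open>C\<^sub>S\<close>, then some schedule beats \<open>S\<close>
  on \<open>\<Delta> X(t) \<approx> t \<Delta> \<eta>\<close> for all large \<open>t\<close>, so \<open>S\<close> is eventually never chosen and \<open>\<alpha>\<^sub>S = 0\<close>.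
\<close>

lemma average_tendsto_zero_if_eventually_zero:
  fixes f :: "nat \<Rightarrow> 'a::real_normed_vector"
  assumes "eventually (\<lambda>s. f s = 0) sequentially"
  shows "(\<lambda>t. (1 / real t) *\<^sub>R (\<Sum>s<t. f s)) \<longlonglongrightarrow> 0"
proof -
  from assms obtain T where T: "\<And>s. s \<ge> T \<Longrightarrow> f s = 0"
    by (auto simp: eventually_sequentially)
  have tail: "(\<Sum>s<t. f s) = (\<Sum>s<T. f s)" if "T \<le> t" for t
  proof -
    have "(\<Sum>s\<in>{T..<t}. f s) = 0"
      using T by (intro sum.neutral) auto
    then show ?thesis
      using sum.atLeastLessThan_concat[of 0 T t f] that by (simp add: atLeast0LessThan)
  qed
  have "eventually (\<lambda>t. (1 / real t) *\<^sub>R (\<Sum>s<T. f s) = (1 / real t) *\<^sub>R (\<Sum>s<t. f s))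
          sequentially"
    using eventually_ge_at_top[of T] by eventually_elim (metis tail)
  moreover have "(\<lambda>t. (1 / real t) *\<^sub>R (\<Sum>s<T. f s)) \<longlonglongrightarrow> 0"
    using tendsto_scaleR[OF lim_const_over_n[of 1] tendsto_const] by simp
  ultimately show ?thesis by (rule Lim_transform_eventually[rotated])
qed

lemma finite_family_convergent_subseq:
  fixes g :: "'a \<Rightarrow> nat \<Rightarrow> 'b::heine_borel"
  assumes "finite F" and "\<And>x. x \<in> F \<Longrightarrow> bounded (range (g x))"
  shows "\<exists>r. strict_mono r \<and> (\<forall>x\<in>F. \<exists>l. (g x \<circ> r) \<longlonglongrightarrow> l)"
  using assms
proof (induction F rule: finite_induct)
  case empty
  show ?case by (rule exI[of _ id]) (simp add: strict_mono_def)
next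
  case (insert y F)
  then obtain r where r: "strict_mono r" "\<forall>x\<in>F. \<exists>l. (g x \<circ> r) \<longlonglongrightarrow> l"
    by blast
  have "bounded (range (g y \<circ> r))"
    using insert.prems by (rule bounded_subset) auto
  then obtain l r' where r': "strict_mono r'" "(g y \<circ> r \<circ> r') \<longlonglongrightarrow> l"
    using bounded_imp_convergent_subsequence by blast
  have "\<exists>l. (g x \<circ> (r \<circ> r')) \<longlonglongrightarrow> l" if "x \<in> insert y F" for x
  proof (cases "x = y")
    case True
    then show ?thesis using r' by (auto simp: o_assoc)
  next
    case False
    with that have "x \<in> F" by simp
    with r obtain l where "(g x \<circ> r) \<longlonglongrightarrow> l" by blast
    from LIMSEQ_subseq_LIMSEQ[OF this r'(1)] show ?thesis by (auto simp: o_assoc)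
  qed
  then show ?case using strict_mono_o[OF r(1) r'(1)] by blast
qed

definition empirical_freq :: "(nat \<Rightarrow> 'a) \<Rightarrow> 'a \<Rightarrow> nat \<Rightarrow> real" where
  "empirical_freq f x t = (\<Sum>s<t. if f s = x then 1 else 0) / real t"

lemma empirical_freq_nonneg: "0 \<le> empirical_freq f x t"
  unfolding empirical_freq_def by (auto intro!: sum_nonneg divide_nonneg_nonneg)

lemma empirical_freq_le_1: "empirical_freq f x t \<le> 1"
proof -
  have "(\<Sum>s<t. if f s = x then 1 else 0) \<le> (\<Sum>s<t. 1::real)"
    by (rule sum_mono) simp
  then show ?thesis
    unfolding empirical_freq_def by (cases "t = 0") (auto simp: field_simps)
qed

lemma sum_empirical_freq:
  assumes "finite F" and "\<And>s. f s \<in> F" and "0 < t"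
  shows "(\<Sum>x\<in>F. empirical_freq f x t) = 1"
proof -
  have "(\<Sum>x\<in>F. empirical_freq f x t)
          = (\<Sum>s<t. \<Sum>x\<in>F. if f s = x then 1 else 0) / real t"
    unfolding empirical_freq_def by (simp add: sum_divide_distrib[symmetric] sum.swap[of _ F])
  also have "\<dots> = 1"
    using assms by (simp add: sum.delta)
  finally show ?thesis .
qed

lemma sum_empirical_freq_scaleR:
  fixes f :: "nat \<Rightarrow> 'a::real_vector"
  assumes "finite F" and "\<And>s. f s \<in> F"
  shows "(\<Sum>x\<in>F. empirical_freq f x t *\<^sub>R x) = (1 / real t) *\<^sub>R (\<Sum>s<t. f s)"
proof -
  have "(\<Sum>s<t. if f s = x then f s else 0) = (\<Sum>s<t. if f s = x then 1 else 0) *\<^sub>R x" for x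
    by (auto simp: scaleR_sum_left intro!: sum.cong)
  then have "empirical_freq f x t *\<^sub>R x = (1 / real t) *\<^sub>R (\<Sum>s<t. if f s = x then f s else 0)" for x
    by (simp add: empirical_freq_def)
  then have "(\<Sum>x\<in>F. empirical_freq f x t *\<^sub>R x)
          = (1 / real t) *\<^sub>R (\<Sum>s<t. \<Sum>x\<in>F. if f s = x then f s else 0)"
    by (simp add: scaleR_sum_right[symmetric] sum.swap[of _ F])
  also have "\<dots> = (1 / real t) *\<^sub>R (\<Sum>s<t. f s)"
    using assms by (simp add: sum.delta)
  finally show ?thesis .
qed

lemma empirical_freq_tendsto_zero:
  assumes "eventually (\<lambda>s. f s \<noteq> x) sequentially"
  shows "empirical_freq f x \<longlonglongrightarrow> 0"
proof -
  have "eventually (\<lambda>s. (if f s = x then 1 else 0::real) = 0) sequentially"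
    using assms by eventually_elim simp
  from average_tendsto_zero_if_eventually_zero[OF this]
  show ?thesis by (simp add: empirical_freq_def[abs_def])
qed

lemma empirical_distribution_convergent_subseq:
  fixes f :: "nat \<Rightarrow> 'a::real_normed_vector"
  assumes F: "finite F" and f: "\<And>s. f s \<in> F"
  obtains r \<alpha> where "strict_mono r"
    and "\<And>x. x \<in> F \<Longrightarrow> 0 \<le> \<alpha> x" and "(\<Sum>x\<in>F. \<alpha> x) = 1"
    and "\<And>x. x \<in> F \<Longrightarrow> (\<lambda>n. empirical_freq f x (r n)) \<longlonglongrightarrow> \<alpha> x"
    and "(\<lambda>n. (1 / real (r n)) *\<^sub>R (\<Sum>s<r n. f s)) \<longlonglongrightarrow> (\<Sum>x\<in>F. \<alpha> x *\<^sub>R x)"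
proof -
  have "bounded (range (empirical_freq f x))" for x
    by (rule boundedI[of _ 1]) (auto simp: abs_of_nonneg empirical_freq_nonneg empirical_freq_le_1)
  then obtain r where r: "strict_mono r"
    and conv: "\<forall>x\<in>F. \<exists>l. (empirical_freq f x \<circ> r) \<longlonglongrightarrow> l"
    using finite_family_convergent_subseq[OF F] by blast
  define \<alpha> where "\<alpha> x = lim (empirical_freq f x \<circ> r)" for x
  have lim: "(\<lambda>n. empirical_freq f x (r n)) \<longlonglongrightarrow> \<alpha> x" if "x \<in> F" for x
    using conv that unfolding \<alpha>_def o_def by (metis convergentI convergent_LIMSEQ_iff)
  have "0 \<le> \<alpha> x" if "x \<in> F" for x
    using lim[OF that] by (rule LIMSEQ_le_const) (simp add: empirical_freq_nonneg)
  moreover have "(\<Sum>x\<in>F. \<alpha> x) = 1"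
  proof (rule LIMSEQ_unique)
    show "(\<lambda>n. \<Sum>x\<in>F. empirical_freq f x (r n)) \<longlonglongrightarrow> (\<Sum>x\<in>F. \<alpha> x)"
      by (intro tendsto_sum lim)
    have "eventually (\<lambda>n. 0 < r n) sequentially"
    proof (rule eventually_sequentiallyI[of 1])
      fix n :: nat assume "1 \<le> n"
      then show "0 < r n" using seq_suble[OF r, of n] by linarith
    qed
    then show "(\<lambda>n. \<Sum>x\<in>F. empirical_freq f x (r n)) \<longlonglongrightarrow> 1"
      by (rule tendsto_eventually[OF eventually_mono]) (simp add: sum_empirical_freq[OF F f])
  qed
  moreover have "(\<lambda>n. \<Sum>x\<in>F. empirical_freq f x (r n) *\<^sub>R x) \<longlonglongrightarrow> (\<Sum>x\<in>F. \<alpha> x *\<^sub>R x)"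
    by (intro tendsto_sum tendsto_scaleR lim tendsto_const)
  ultimately show ?thesis
    using that[OF r _ _ lim] by (simp add: sum_empirical_freq_scaleR[OF F f])
qed

lemma filterlim_at_top_if_linear_growth:
  fixes x :: "nat \<Rightarrow> real"
  assumes "(\<lambda>t. x t / real t) \<longlonglongrightarrow> c" and "0 < c"
  shows "filterlim x at_top sequentially"
proof -
  have "filterlim (\<lambda>t. x t / real t * real t) at_top sequentially"
    by (rule filterlim_tendsto_pos_mult_at_top[OF assms filterlim_real_sequentially])
  moreover have "eventually (\<lambda>t. x t / real t * real t = x t) sequentially"
    using eventually_gt_at_top[of 0] by eventually_elim simp
  ultimately show ?thesis
    by (simp add: filterlim_cong[OF refl refl])
qed

lemma queue_growth_rate:
  fixes a srv x :: "nat \<Rightarrow> real" and r :: "nat \<Rightarrow> nat"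
  assumes x0: "x 0 = 0"
    and step: "\<And>t. x (Suc t) = x t + a t - min (srv t) (x t)"
    and a_nonneg: "\<And>t. 0 \<le> a t"
    and srv_bounded: "\<And>t. srv t \<le> B"
    and arrival_rate: "(\<lambda>t. (\<Sum>s<t. a s) / real t) \<longlonglongrightarrow> \<rho>"
    and growth_rate: "(\<lambda>t. x t / real t) \<longlonglongrightarrow> \<eta>"
    and r: "strict_mono r"
    and service_rate: "(\<lambda>n. (\<Sum>s<r n. srv s) / real (r n)) \<longlonglongrightarrow> \<sigma>"
  shows "\<eta> = max 0 (\<rho> - \<sigma>)"
proof -
  define d where "d t = min (srv t) (x t)" for t
  have x_sum: "x t = (\<Sum>s<t. a s - d s)" for t
    by (induction t) (simp_all add: x0 step d_def)
  have x_nonneg: "0 \<le> x t" for t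
  proof (induction t)
    case (Suc t)
    then show ?case
      using step[of t] a_nonneg[of t] by (simp add: min_def)
  qed (simp add: x0)
  have departure_rate: "(\<lambda>n. (\<Sum>s<r n. d s) / real (r n)) \<longlonglongrightarrow> \<rho> - \<eta>"
  proof -
    have "(\<lambda>t. (\<Sum>s<t. d s) / real t) \<longlonglongrightarrow> \<rho> - \<eta>"
      using tendsto_diff[OF arrival_rate growth_rate]
      by (simp add: x_sum sum_subtractf diff_divide_distrib)
    from LIMSEQ_subseq_LIMSEQ[OF this r] show ?thesis by (simp add: o_def)
  qed
  have "\<rho> - \<eta> \<le> \<sigma>"
    by (rule LIMSEQ_le[OF departure_rate service_rate])
      (auto intro!: exI divide_right_mono sum_mono simp: d_def)
  moreover have "0 \<le> \<eta>"
    by (rule LIMSEQ_le_const[OF growth_rate]) (simp add: x_nonneg)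
  moreover have "\<rho> - \<eta> = \<sigma>" if "0 < \<eta>"
  proof -
    have "eventually (\<lambda>t. B \<le> x t) sequentially"
      using filterlim_at_top_if_linear_growth[OF growth_rate that] by (simp add: filterlim_at_top)
    then have "eventually (\<lambda>t. srv t - d t = 0) sequentially"
    proof (rule eventually_mono)
      fix t assume "B \<le> x t"
      with srv_bounded[of t] have "srv t \<le> x t" by linarith
      then show "srv t - d t = 0" by (simp add: d_def)
    qed
    from LIMSEQ_subseq_LIMSEQ[OF average_tendsto_zero_if_eventually_zero[OF this] r]
    have "(\<lambda>n. (\<Sum>s<r n. srv s - d s) / real (r n)) \<longlonglongrightarrow> 0"
      by (simp add: o_def)
    moreover have "(\<lambda>n. (\<Sum>s<r n. srv s - d s) / real (r n)) \<longlonglongrightarrow> \<sigma> - (\<rho> - \<eta>)"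
      using tendsto_diff[OF service_rate departure_rate] by (simp add: sum_subtractf diff_divide_distrib)
    ultimately have "0 = \<sigma> - (\<rho> - \<eta>)"
      by (rule LIMSEQ_unique)
    then show ?thesis by simp
  qed
  ultimately show ?thesis by (cases "0 < \<eta>") simp_all
qed

lemma queue_growth_rates_eq_pos_part:
  fixes A X Ssel :: "nat \<Rightarrow> real^'q"
  assumes X0: "X 0 = 0"
    and step: "\<And>t q. X (Suc t) $ q = X t $ q + A t $ q - min (Ssel t $ q) (X t $ q)"
    and A_nonneg: "\<And>t q. 0 \<le> A t $ q"
    and Ssel_bounded: "\<And>t q. Ssel t $ q \<le> B $ q"
    and arrival_rate: "(\<lambda>t. (1 / real t) *\<^sub>R (\<Sum>s<t. A s)) \<longlonglongrightarrow> \<rho>"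
    and growth_rate: "(\<lambda>t. (1 / real t) *\<^sub>R X t) \<longlonglongrightarrow> \<eta>"
    and r: "strict_mono r"
    and service_rate: "(\<lambda>n. (1 / real (r n)) *\<^sub>R (\<Sum>s<r n. Ssel s)) \<longlonglongrightarrow> \<sigma>"
  shows "\<eta> = pos_part (\<rho> - \<sigma>)"
proof -
  have "\<eta> $ q = max 0 (\<rho> $ q - \<sigma> $ q)" for q
  proof (rule queue_growth_rate[where x = "\<lambda>t. X t $ q" and a = "\<lambda>t. A t $ q"
                                    and srv = "\<lambda>t. Ssel t $ q" and r = r])
    show "(\<lambda>t. (\<Sum>s<t. A s $ q) / real t) \<longlonglongrightarrow> \<rho> $ q"
      using tendsto_vec_nth[OF arrival_rate, of q] by simp
    show "(\<lambda>t. X t $ q / real t) \<longlonglongrightarrow> \<eta> $ q"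
      using tendsto_vec_nth[OF growth_rate, of q] by simp
    show "(\<lambda>n. (\<Sum>s<r n. Ssel s $ q) / real (r n)) \<longlonglongrightarrow> \<sigma> $ q"
      using tendsto_vec_nth[OF service_rate, of q] by simp
  qed (use X0 step A_nonneg Ssel_bounded r in simp_all)
  then show ?thesis
    by (simp add: pos_part_def vec_eq_iff)
qed

lemma eventually_not_selected_outside_cone:
  fixes Sch :: "(real^'q) set" and X Ssel :: "nat \<Rightarrow> real^'q"
  assumes "finite Sch" and "S \<in> Sch" and "\<eta> \<notin> cone_C \<Delta> Sch S"
    and max_weight: "\<And>t S'. S' \<in> Sch \<Longrightarrow> S' \<bullet> (\<Delta> *v X t) \<le> Ssel t \<bullet> (\<Delta> *v X t)"
    and growth: "(\<lambda>t. (1 / real t) *\<^sub>R X t) \<longlonglongrightarrow> \<eta>"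
  shows "eventually (\<lambda>t. Ssel t \<noteq> S) sequentially"
proof -
  let ?weights = "(\<lambda>S'. S' \<bullet> (\<Delta> *v \<eta>)) ` Sch"
  have "Max ?weights \<in> ?weights"
    using assms(1,2) by (intro Max_in) auto
  then obtain S' where "S' \<in> Sch" and S': "S' \<bullet> (\<Delta> *v \<eta>) = Max ?weights"
    by auto
  have "S \<bullet> (\<Delta> *v \<eta>) \<le> Max ?weights"
    using assms(1,2) by (intro Max_ge) auto
  moreover have "S \<bullet> (\<Delta> *v \<eta>) \<noteq> Max ?weights"
    using assms(3) by (simp add: cone_C_def)
  ultimately have gap: "0 < (S' - S) \<bullet> (\<Delta> *v \<eta>)"
    using S' by (simp add: inner_diff_left)
  have "(\<lambda>t. (S' - S) \<bullet> (\<Delta> *v ((1 / real t) *\<^sub>R X t))) \<longlonglongrightarrow> (S' - S) \<bullet> (\<Delta> *v \<eta>)"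
    by (intro tendsto_inner tendsto_const growth
        bounded_linear.tendsto[OF matrix_vector_mul_bounded_linear])
  from order_tendstoD(1)[OF this gap]
  show ?thesis
  proof eventually_elim
    case (elim t)
    then have "0 < (1 / real t) * ((S' - S) \<bullet> (\<Delta> *v X t))"
      by (simp add: matrix_vector_mult_scaleR)
    then have "S \<bullet> (\<Delta> *v X t) < S' \<bullet> (\<Delta> *v X t)"
      by (auto simp: zero_less_divide_iff inner_diff_left)
    then show ?case
      using max_weight[OF \<open>S' \<in> Sch\<close>, of t] by auto
  qed
qed

theorem lemma8:
  fixes Sch :: "(real^'q) set"
    and \<Delta> :: "real^'q^'q"
    and A X D Ssel :: "nat \<Rightarrow> real^'q"
    and Abar \<rho> \<eta> :: "real^'q"
  assumes Sch_fin: "finite Sch" and Sch_ne: "Sch \<noteq> {}"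
    and Sch_nonneg: "\<forall>S\<in>Sch. \<forall>q. 0 \<le> S $ q"
    and Delta_diag: "\<forall>i j. i \<noteq> j \<longrightarrow> \<Delta> $ i $ j = 0"
    and Delta_pos: "\<forall>i. 0 < \<Delta> $ i $ i"
    and A_bnd: "\<forall>t q. 0 \<le> A t $ q \<and> A t $ q \<le> Abar $ q"
    and rho_lim: "(\<lambda>t. (1 / real t) *\<^sub>R (\<Sum>s<t. A s)) \<longlonglongrightarrow> \<rho>"
    and rho_pos: "\<forall>q. 0 < \<rho> $ q"
    and sched: "\<forall>t. Ssel t \<in> Sch \<and>
                  (\<forall>S'\<in>Sch. S' \<bullet> (\<Delta> *v X t) \<le> Ssel t \<bullet> (\<Delta> *v X t))"
    and dep: "\<forall>t q. D t $ q = min (Ssel t $ q) (X t $ q)"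
    and X0: "X 0 = 0"
    and Xstep: "\<forall>t. X (Suc t) = X t + A t - D t"
    and overload: "\<rho> \<notin> stab_region Sch"
    and eta_lim: "(\<lambda>t. (1 / real t) *\<^sub>R X t) \<longlonglongrightarrow> \<eta>"
  shows "\<exists>\<alpha>::real^'q \<Rightarrow> real. (\<forall>S\<in>Sch. 0 \<le> \<alpha> S) \<and> (\<Sum>S\<in>Sch. \<alpha> S) = 1 \<and>
           \<eta> = pos_part (\<rho> - (\<Sum>S\<in>Sch. \<alpha> S *\<^sub>R S)) \<and>
           (\<forall>S\<in>Sch. 0 < \<alpha> S \<longrightarrow> \<eta> \<in> cone_C \<Delta> Sch S)"
proof -
  have Ssel_in: "Ssel t \<in> Sch" for t
    using sched by blast
  obtain r \<alpha> where r: "strict_mono r"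
    and \<alpha>_nonneg: "\<And>S. S \<in> Sch \<Longrightarrow> 0 \<le> \<alpha> S" and \<alpha>_sum: "(\<Sum>S\<in>Sch. \<alpha> S) = 1"
    and freq: "\<And>S. S \<in> Sch \<Longrightarrow> (\<lambda>n. empirical_freq Ssel S (r n)) \<longlonglongrightarrow> \<alpha> S"
    and service: "(\<lambda>n. (1 / real (r n)) *\<^sub>R (\<Sum>s<r n. Ssel s)) \<longlonglongrightarrow> (\<Sum>S\<in>Sch. \<alpha> S *\<^sub>R S)"
    using empirical_distribution_convergent_subseq[where f = Ssel, OF Sch_fin Ssel_in] by blast
  have "\<eta> = pos_part (\<rho> - (\<Sum>S\<in>Sch. \<alpha> S *\<^sub>R S))"
  proof (rule queue_growth_rates_eq_pos_part[OF X0 _ _ _ rho_lim eta_lim r service])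
    show "Ssel t $ q \<le> (\<Sum>S\<in>Sch. S) $ q" for t q
      unfolding sum_component using Sch_fin Sch_nonneg Ssel_in by (intro member_le_sum) auto
  qed (use Xstep dep A_bnd in auto)
  moreover have "\<eta> \<in> cone_C \<Delta> Sch S" if "S \<in> Sch" and "0 < \<alpha> S" for S
  proof (rule ccontr)
    assume "\<eta> \<notin> cone_C \<Delta> Sch S"
    from eventually_not_selected_outside_cone[OF Sch_fin \<open>S \<in> Sch\<close> this _ eta_lim] sched
    have "eventually (\<lambda>t. Ssel t \<noteq> S) sequentially"
      by blast
    from LIMSEQ_subseq_LIMSEQ[OF empirical_freq_tendsto_zero[OF this] r]
    have "(\<lambda>n. empirical_freq Ssel S (r n)) \<longlonglongrightarrow> 0"
      by (simp add: o_def)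
    with freq[OF \<open>S \<in> Sch\<close>] have "\<alpha> S = 0"
      by (rule LIMSEQ_unique)
    with \<open>0 < \<alpha> S\<close> show False
      by simp
  qed
  ultimately show ?thesis
    using \<alpha>_nonneg \<alpha>_sum by (intro exI[of _ \<alpha>]) blast
qed

end
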